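(* For a connected scalar Feynman graph $G$ with $n+1$ vertices ($n\ge1$) and $I$ internal lines, the function $D_R(p,E,T)$ produced by the OFPT-rules satisfies $$D_R(p,E,T)=\hat O(E,T)\,D_0(p,E),\qquad \hat O(E,T)=\sum_{J}\ \prod_{j\in J}n(E_j)\,(1+\mathcal{S}_j),$$ where the sum runs over all subsets $J\subseteq\{1,\dots,I\}$ (including $J=\emptyset$, contributing the identity) such that the graph obtained from $G$ by deleting all internal lines in $J$ is still connected (such $J$ have at most $L=I-n$ elements).
   Context: Setting: $T>0$, $n(E)=(e^{E/T}-1)^{-1}$. Each external line $l$ of $G$ carries a real Euclidean 4-vector $(p_l,\mathbf p_l)$ and is assigned energy $ip_l$; each internal line $i$ carries 3-momentum $\mathbf k_i$ and is assigned energy $E_i=(\mathbf k_i^2+m_i^2)^{1/2}$. OFPT-rules: (b) fix a time direction and consider all $(n+1)!$ orderings of the vertices along it. (c) For each time-ordered graph consider, besides itself, all connected graphs obtained by snipping any set of internal lines; a snipped line $i$ becomes a pair of "thermal legs" attached at its two endpoint vertices, both carrying energy $E_i$, one oriented incoming and the other outgoing; both orientations are considered, each giving a different diagram. (d) For such a diagram, a thermal pair is called external if its incoming leg joins the diagram (in the time ordering) before its outgoing partner, and internal otherwise. Let $E_{inc}$ be the sum of all incoming external energies plus the energies of the incoming legs of all external thermal pairs. The diagram's value is the product of: for each of the $n$ vertical cuts between consecutive time-ordered vertices, a factor $1/(E_{inc}-E_{cut})$, where $E_{cut}$ is the sum of the energies of all lines crossing the cut (as in zero-temperature time-ordered perturbation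 theory) plus the energies of all internal thermal pairs whose originating internal line would have crossed the cut; a factor $n(E_i)$ for each thermal pair; and an overall factor $(-1)^n$. (e) $D_R(p,E,T)$ is the sum of these values over all diagrams in (c). $D_0(p,E):=D_R(p,E,0)$, i.e. the sum over the unsnipped time-ordered diagrams with the weights of rule (d) (the zero-temperature Euclidean $D$-function computed by old-fashioned perturbation theory), regarded as a function of independent variables $E_1,\dots,E_I$. $\mathcal{S}_j$ is the reflection $E_j\mapsto -E_j$ acting on $D_0$; the factors $n(E_j)$ are multiplicative constants. *)

theory Defs
  imports "HOL-Analysis.Analysis" "HOL-Combinatorics.Permutations" "HOL-Library.FuncSet"
begin

text \<open>A scalar Feynman graph: vertices 0..nv (so nv = n, i.e. n+1 vertices),
  internal lines 0..<nl (I lines) with endpoints src/tgt (the orientation of a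
  line is only a labelling of its two endpoints), external lines 0..<nex, line l
  attached to vertex exv l.  All external lines are taken as incoming with
  energy i*p_l (an outgoing line is an incoming one with reversed momentum).\<close>

record fgraph =
  nv  :: nat
  nl  :: nat
  src :: "nat \<Rightarrow> nat"
  tgt :: "nat \<Rightarrow> nat"
  nex :: nat
  exv :: "nat \<Rightarrow> nat"

definition well_formed :: "fgraph \<Rightarrow> bool" where
  "well_formed G \<longleftrightarrow> 1 \<le> nv G \<and>
     (\<forall>i<nl G. src G i \<le> nv G \<and> tgt G i \<le> nv G) \<and>
     (\<forall>l<nex G. exv G l \<le> nv G)"

definition bose :: "real \<Rightarrow> real \<Rightarrow> real" where
  "bose T x = 1 / (exp (x / T) - 1)"

definition adj :: "fgraph \<Rightarrow> nat set \<Rightarrow> nat \<Rightarrow> nat \<Rightarrow> bool" where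
  "adj G S a b \<longleftrightarrow> (\<exists>i\<in>S. (src G i = a \<and> tgt G i = b) \<or> (src G i = b \<and> tgt G i = a))"

definition connected_lines :: "fgraph \<Rightarrow> nat set \<Rightarrow> bool" where
  "connected_lines G S \<longleftrightarrow> (\<forall>a\<le>nv G. \<forall>b\<le>nv G. (adj G S)\<^sup>*\<^sup>* a b)"

definition admissible :: "fgraph \<Rightarrow> nat set set" where
  "admissible G = {J. J \<subseteq> {..<nl G} \<and> connected_lines G ({..<nl G} - J)}"

text \<open>Time orderings: \<pi> v is the position of vertex v; all (n+1)! of them.\<close>
definition orderings :: "fgraph \<Rightarrow> (nat \<Rightarrow> nat) set" where
  "orderings G = {\<pi>. \<pi> permutes {..nv G}}"

text \<open>Cut k (k < n) separates positions 0..k from k+1..n.\<close>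
definition crosses :: "fgraph \<Rightarrow> (nat \<Rightarrow> nat) \<Rightarrow> nat \<Rightarrow> nat \<Rightarrow> bool" where
  "crosses G \<pi> k i \<longleftrightarrow> ((\<pi> (src G i) \<le> k) \<noteq> (\<pi> (tgt G i) \<le> k))"

text \<open>Orientation ori j of a snipped line j: True = incoming leg at src, outgoing at tgt.\<close>
definition in_v :: "fgraph \<Rightarrow> (nat \<Rightarrow> bool) \<Rightarrow> nat \<Rightarrow> nat" where
  "in_v G ori j = (if ori j then src G j else tgt G j)"

definition out_v :: "fgraph \<Rightarrow> (nat \<Rightarrow> bool) \<Rightarrow> nat \<Rightarrow> nat" where
  "out_v G ori j = (if ori j then tgt G j else src G j)"

text \<open>External thermal pair: incoming leg joins strictly before its outgoing partner.\<close>
definition ext_pair :: "fgraph \<Rightarrow> (nat \<Rightarrow> nat) \<Rightarrow> (nat \<Rightarrow> bool) \<Rightarrow> nat \<Rightarrow> bool" where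
  "ext_pair G \<pi> ori j \<longleftrightarrow> \<pi> (in_v G ori j) < \<pi> (out_v G ori j)"

definition E_inc :: "fgraph \<Rightarrow> (nat \<Rightarrow> real \<times> (real^3)) \<Rightarrow> (nat \<Rightarrow> real)
    \<Rightarrow> (nat \<Rightarrow> nat) \<Rightarrow> nat set \<Rightarrow> (nat \<Rightarrow> bool) \<Rightarrow> complex" where
  "E_inc G p E \<pi> J ori =
     (\<Sum>l<nex G. \<i> * of_real (fst (p l))) +
     (\<Sum>j\<in>{j\<in>J. ext_pair G \<pi> ori j}. of_real (E j))"

text \<open>Energy of all lines crossing cut k: unsnipped internal lines crossing the cut,
  internal thermal pairs whose original line crosses the cut, external lines not yet
  absorbed, and legs of external thermal pairs (incoming legs not yet absorbed,
  outgoing legs already emitted), exactly as external lines in time-ordered PT.\<close>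
definition E_cut :: "fgraph \<Rightarrow> (nat \<Rightarrow> real \<times> (real^3)) \<Rightarrow> (nat \<Rightarrow> real)
    \<Rightarrow> (nat \<Rightarrow> nat) \<Rightarrow> nat set \<Rightarrow> (nat \<Rightarrow> bool) \<Rightarrow> nat \<Rightarrow> complex" where
  "E_cut G p E \<pi> J ori k =
     (\<Sum>i\<in>{i\<in>{..<nl G} - J. crosses G \<pi> k i}. of_real (E i)) +
     (\<Sum>j\<in>{j\<in>J. \<not> ext_pair G \<pi> ori j \<and> crosses G \<pi> k j}. of_real (E j)) +
     (\<Sum>l\<in>{l\<in>{..<nex G}. k < \<pi> (exv G l)}. \<i> * of_real (fst (p l))) +
     (\<Sum>j\<in>{j\<in>J. ext_pair G \<pi> ori j \<and> k < \<pi> (in_v G ori j)}. of_real (E j)) +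
     (\<Sum>j\<in>{j\<in>J. ext_pair G \<pi> ori j \<and> \<pi> (out_v G ori j) \<le> k}. of_real (E j))"

definition denom_part :: "fgraph \<Rightarrow> (nat \<Rightarrow> real \<times> (real^3)) \<Rightarrow> (nat \<Rightarrow> real)
    \<Rightarrow> (nat \<Rightarrow> nat) \<Rightarrow> nat set \<Rightarrow> (nat \<Rightarrow> bool) \<Rightarrow> complex" where
  "denom_part G p E \<pi> J ori =
     (-1) ^ nv G * (\<Prod>k<nv G. 1 / (E_inc G p E \<pi> J ori - E_cut G p E \<pi> J ori k))"

definition diag_value :: "fgraph \<Rightarrow> (nat \<Rightarrow> real \<times> (real^3)) \<Rightarrow> (nat \<Rightarrow> real) \<Rightarrow> real
    \<Rightarrow> (nat \<Rightarrow> nat) \<Rightarrow> nat set \<Rightarrow> (nat \<Rightarrow> bool) \<Rightarrow> complex" where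
  "diag_value G p E T \<pi> J ori =
     denom_part G p E \<pi> J ori * of_real (\<Prod>j\<in>J. bose T (E j))"

definition D_R :: "fgraph \<Rightarrow> (nat \<Rightarrow> real \<times> (real^3)) \<Rightarrow> (nat \<Rightarrow> real) \<Rightarrow> real \<Rightarrow> complex" where
  "D_R G p E T =
     (\<Sum>\<pi>\<in>orderings G. \<Sum>J\<in>admissible G. \<Sum>ori\<in>J \<rightarrow>\<^sub>E (UNIV :: bool set).
        diag_value G p E T \<pi> J ori)"

text \<open>D_0: sum over the unsnipped time-ordered diagrams, as a function of independent
  real energy variables E.\<close>
definition D_0 :: "fgraph \<Rightarrow> (nat \<Rightarrow> real \<times> (real^3)) \<Rightarrow> (nat \<Rightarrow> real) \<Rightarrow> complex" where
  "D_0 G p E = (\<Sum>\<pi>\<in>orderings G. denom_part G p E \<pi> {} (\<lambda>_. False))"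

definition reflect :: "nat set \<Rightarrow> (nat \<Rightarrow> real) \<Rightarrow> (nat \<Rightarrow> real)" where
  "reflect K E = (\<lambda>i. if i \<in> K then - E i else E i)"

text \<open>The operator O(E,T) applied to a function f of the energy variables:
  \<Prod>_{j\<in>J} n(E_j)(1+S_j) f = (\<Prod>_{j\<in>J} n(E_j)) \<Sum>_{K\<subseteq>J} f \<circ> S_K,
  the n(E_j) being constants evaluated at the unreflected energies.\<close>
definition O_hat :: "fgraph \<Rightarrow> (nat \<Rightarrow> real) \<Rightarrow> real \<Rightarrow> ((nat \<Rightarrow> real) \<Rightarrow> complex) \<Rightarrow> complex" where
  "O_hat G E T f =
     (\<Sum>J\<in>admissible G. of_real (\<Prod>j\<in>J. bose T (E j)) * (\<Sum>K\<in>Pow J. f (reflect K E)))"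

end

(*
  A snipped line j with an internal thermal pair enters every cut its line crossed with
  energy E_j, exactly as the unsnipped line does.  An external pair adds E_j to E_inc and
  to every cut outside the interval between its two legs, so E_inc - E_cut changes as if
  the line carried energy -E_j.  Hence every diagram has the denominators of the unsnipped
  time-ordered diagram with E reflected on its external pairs.  For a line that is not a
  loop exactly one of the two orientations makes the pair external, so orientations of J
  correspond to subsets K of J; a loop crosses no cut, so reflecting it changes nothing.
*)
theory Submission
  imports Defs
begin

lemma bij_betw_PiE_bool_Pow:
  "bij_betw (\<lambda>ori. {j\<in>J. ori j = c j}) (J \<rightarrow>\<^sub>E (UNIV :: bool set)) (Pow J)"
proof (rule bij_betw_byWitness[where f' = "\<lambda>K. \<lambda>j\<in>J. (j \<in> K) = c j"])
  show "\<forall>ori\<in>J \<rightarrow>\<^sub>E UNIV. (\<lambda>j\<in>J. (j \<in> {j\<in>J. ori j = c j}) = c j) = ori"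
    by (auto simp: PiE_iff fun_eq_iff)
qed auto

lemma E_inc_minus_E_cut_reflect_external:
  fixes E :: "nat \<Rightarrow> real" and \<pi> :: "nat \<Rightarrow> nat" and ori :: "nat \<Rightarrow> bool"
  assumes J: "J \<subseteq> {..<nl G}"
  defines "E' \<equiv> reflect {j\<in>J. ext_pair G \<pi> ori j} E"
  shows "E_inc G p E \<pi> J ori - E_cut G p E \<pi> J ori k
       = E_inc G p E' \<pi> {} (\<lambda>_. False) - E_cut G p E' \<pi> {} (\<lambda>_. False) k"
proof -
  define N where "N = {..<nl G}"
  have over_lines: "(\<Sum>j\<in>{j\<in>B. P j}. f j) = (\<Sum>i\<in>N. if i \<in> B \<and> P i then f i else 0)"
    if "B \<subseteq> N" for B P and f :: "nat \<Rightarrow> complex"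
  proof -
    have "{i\<in>N. i \<in> B \<and> P i} = {j\<in>B. P j}"
      using that by auto
    then show ?thesis
      using sum.inter_filter[of N f "\<lambda>i. i \<in> B \<and> P i"] by (simp add: N_def)
  qed
  have "J \<subseteq> N" "N - J \<subseteq> N" "N \<subseteq> N" using J by (auto simp: N_def)
  note lines = this[THEN over_lines]
  let ?ext = "ext_pair G \<pi> ori" and ?cr = "crosses G \<pi> k"
  have pointwise: "(if i \<in> N \<and> ?cr i then complex_of_real (E' i) else 0)
      = (if i \<in> N - J \<and> ?cr i then complex_of_real (E i) else 0)
      + (if i \<in> J \<and> \<not> ?ext i \<and> ?cr i then complex_of_real (E i) else 0)
      - (if i \<in> J \<and> ?ext i then complex_of_real (E i) else 0)
      + (if i \<in> J \<and> ?ext i \<and> k < \<pi> (in_v G ori i) then complex_of_real (E i) else 0)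
      + (if i \<in> J \<and> ?ext i \<and> \<pi> (out_v G ori i) \<le> k then complex_of_real (E i) else 0)" for i
    using J unfolding E'_def reflect_def crosses_def ext_pair_def in_v_def out_v_def N_def
    by (cases "ori i") auto
  show ?thesis
    unfolding E_inc_def E_cut_def N_def[symmetric] Diff_empty
    by (simp only: lines pointwise sum.distrib sum_subtractf) (simp add: algebra_simps)
qed

lemma denom_part_reflect_external:
  assumes "J \<subseteq> {..<nl G}"
  shows "denom_part G p E \<pi> J ori
       = denom_part G p (reflect {j\<in>J. ext_pair G \<pi> ori j} E) \<pi> {} (\<lambda>_. False)"
  unfolding denom_part_def using E_inc_minus_E_cut_reflect_external[OF assms] by simp

lemma denom_part_unsnipped_cong:
  assumes "\<And>i. i < nl G \<Longrightarrow> src G i \<noteq> tgt G i \<Longrightarrow> E i = E' i"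
  shows "denom_part G p E \<pi> {} ori = denom_part G p E' \<pi> {} ori'"
proof -
  have "src G i \<noteq> tgt G i" if "crosses G \<pi> k i" for k i
    using that by (auto simp: crosses_def)
  with assms show ?thesis
    by (auto simp: denom_part_def E_inc_def E_cut_def intro!: prod.cong sum.cong)
qed

lemma ext_pair_iff_orientation:
  assumes "\<pi> (src G j) \<noteq> \<pi> (tgt G j)"
  shows "ext_pair G \<pi> ori j \<longleftrightarrow> ori j = (\<pi> (src G j) < \<pi> (tgt G j))"
  using assms by (auto simp: ext_pair_def in_v_def out_v_def)

lemma sum_orientations_denom_part:
  assumes wf: "well_formed G" and \<pi>: "\<pi> \<in> orderings G" and J: "J \<subseteq> {..<nl G}"
  shows "(\<Sum>ori\<in>J \<rightarrow>\<^sub>E (UNIV :: bool set). denom_part G p E \<pi> J ori)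
       = (\<Sum>K\<in>Pow J. denom_part G p (reflect K E) \<pi> {} (\<lambda>_. False))"
proof -
  define g where "g K = denom_part G p (reflect K E) \<pi> {} (\<lambda>_. False)" for K
  define c where "c j = (\<pi> (src G j) < \<pi> (tgt G j))" for j
  have "g {j\<in>J. ext_pair G \<pi> ori j} = g {j\<in>J. ori j = c j}" for ori
    unfolding g_def
  proof (rule denom_part_unsnipped_cong)
    fix i assume i: "i < nl G" "src G i \<noteq> tgt G i"
    have "inj_on \<pi> {..nv G}"
      using \<pi> by (auto simp: orderings_def permutes_inj_on)
    with i wf have "\<pi> (src G i) \<noteq> \<pi> (tgt G i)"
      by (auto simp: well_formed_def dest: inj_onD)
    then show "reflect {j\<in>J. ext_pair G \<pi> ori j} E i = reflect {j\<in>J. ori j = c j} E i"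
      by (simp add: reflect_def ext_pair_iff_orientation c_def)
  qed
  then have "(\<Sum>ori\<in>J \<rightarrow>\<^sub>E UNIV. denom_part G p E \<pi> J ori)
      = (\<Sum>ori\<in>J \<rightarrow>\<^sub>E UNIV. g {j\<in>J. ori j = c j})"
    by (simp add: g_def denom_part_reflect_external[OF J])
  also have "\<dots> = (\<Sum>K\<in>Pow J. g K)"
    by (rule sum.reindex_bij_betw[OF bij_betw_PiE_bool_Pow])
  finally show ?thesis unfolding g_def .
qed

lemma D_R_eq_O_hat_D_0:
  assumes "well_formed G"
  shows "D_R G p E T = O_hat G E T (D_0 G p)"
proof -
  have "D_R G p E T = (\<Sum>\<pi>\<in>orderings G. \<Sum>J\<in>admissible G.
      of_real (\<Prod>j\<in>J. bose T (E j)) * (\<Sum>K\<in>Pow J. denom_part G p (reflect K E) \<pi> {} (\<lambda>_. False)))"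
    unfolding D_R_def diag_value_def
    by (intro sum.cong refl)
      (simp add: admissible_def sum_orientations_denom_part[OF assms] flip: sum_distrib_right mult.commute)
  also have "\<dots> = O_hat G E T (D_0 G p)"
    unfolding O_hat_def D_0_def
    by (simp add: sum_distrib_left sum.swap[of _ "orderings G"])
  finally show ?thesis .
qed

theorem theorem1:
  fixes G :: fgraph and p :: "nat \<Rightarrow> real \<times> (real^3)"
    and k :: "nat \<Rightarrow> real^3" and m :: "nat \<Rightarrow> real" and T :: real
  assumes "well_formed G" and "connected_lines G {..<nl G}" and "T > 0"
  defines "E \<equiv> (\<lambda>i. sqrt ((norm (k i))\<^sup>2 + (m i)\<^sup>2))"
  shows "D_R G p E T = O_hat G E T (D_0 G p)"
  using assms(1) by (rule D_R_eq_O_hat_D_0)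

end
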